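(* Let $n\ge3$ and $m,k\ge1$ be integers, let $t,u\in\mathbb{Z}_n$ with $t^2\equiv u\pmod n$, and let $G$ be the set of all $m\times k$ matrices over $\mathbb{Z}_n$ with the operation $[a_{ij}]*[b_{ij}]=[(t a_{ij}+u b_{ij})\bmod n]$. Then $(G,* )$ is a transitively commutative AG-groupoid.
   Context: An AG-groupoid is a set with a binary operation satisfying $(a*b)*c=(c*b)*a$ for all $a,b,c$. An AG-groupoid $G$ is transitively commutative if for all $a,b,c\in G$, $a*b=b*a$ and $b*c=c*b$ imply $a*c=c*a$. *)

theory Defs
  imports Main
begin

definition AG_groupoid :: "'a set \<Rightarrow> ('a \<Rightarrow> 'a \<Rightarrow> 'a) \<Rightarrow> bool" where
  "AG_groupoid G f \<longleftrightarrow>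
     (\<forall>a\<in>G. \<forall>b\<in>G. f a b \<in> G) \<and>
     (\<forall>a\<in>G. \<forall>b\<in>G. \<forall>c\<in>G. f (f a b) c = f (f c b) a)"

definition transitively_commutative :: "'a set \<Rightarrow> ('a \<Rightarrow> 'a \<Rightarrow> 'a) \<Rightarrow> bool" where
  "transitively_commutative G f \<longleftrightarrow>
     (\<forall>a\<in>G. \<forall>b\<in>G. \<forall>c\<in>G. f a b = f b a \<longrightarrow> f b c = f c b \<longrightarrow> f a c = f c a)"

text \<open>m x k matrices over Z_n: functions on indices with entries in {0..<n}
  for i<m, j<k, and value 0 outside the index range (so equality is matrix equality).\<close>
definition zn_matrices :: "int \<Rightarrow> nat \<Rightarrow> nat \<Rightarrow> (nat \<Rightarrow> nat \<Rightarrow> int) set" where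
  "zn_matrices n m k = {A. (\<forall>i j. i < m \<and> j < k \<longrightarrow> A i j \<in> {0..<n}) \<and>
                            (\<forall>i j. \<not> (i < m \<and> j < k) \<longrightarrow> A i j = 0)}"

definition zn_op :: "int \<Rightarrow> nat \<Rightarrow> nat \<Rightarrow> int \<Rightarrow> int \<Rightarrow>
    (nat \<Rightarrow> nat \<Rightarrow> int) \<Rightarrow> (nat \<Rightarrow> nat \<Rightarrow> int) \<Rightarrow> (nat \<Rightarrow> nat \<Rightarrow> int)" where
  "zn_op n m k t u A B = (\<lambda>i j. if i < m \<and> j < k then (t * A i j + u * B i j) mod n else 0)"

end

theory Submission
  imports Defs
begin

text \<open>The left invertive
  law holds because the two sides differ by (t^2 - u)(a - c), and a and b commute exactly
  when n divides (t - u)(a - b); the latter relation is transitive, being the kernel of a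
  group homomorphism.\<close>

lemma affine_mod_left_invertive:
  fixes n t u a b c :: int
  assumes "n dvd t\<^sup>2 - u"
  shows "(t * ((t*a + u*b) mod n) + u*c) mod n = (t * ((t*c + u*b) mod n) + u*a) mod n"
proof -
  have "(t * ((t*a + u*b) mod n) + u*c) mod n = (t*(t*a + u*b) + u*c) mod n"
    by (metis mod_add_left_eq mod_mult_right_eq)
  also have "\<dots> = (t*(t*c + u*b) + u*a) mod n"
  proof -
    have "(t*(t*a + u*b) + u*c) - (t*(t*c + u*b) + u*a) = (t\<^sup>2 - u) * (a - c)"
      by (simp add: algebra_simps power2_eq_square)
    then show ?thesis
      using assms by (simp add: mod_eq_dvd_iff)
  qed
  also have "\<dots> = (t * ((t*c + u*b) mod n) + u*a) mod n"
    by (metis mod_add_left_eq mod_mult_right_eq)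
  finally show ?thesis .
qed

lemma affine_mod_commute_iff:
  fixes n t u a b :: int
  shows "(t*a + u*b) mod n = (t*b + u*a) mod n \<longleftrightarrow> n dvd (t - u) * (a - b)"
proof -
  have "(t*a + u*b) - (t*b + u*a) = (t - u) * (a - b)"
    by (simp add: algebra_simps)
  then show ?thesis
    by (simp add: mod_eq_dvd_iff)
qed

lemma zn_op_closed:
  assumes "n > 0"
  shows "zn_op n m k t u A B \<in> zn_matrices n m k"
  using assms by (simp add: zn_matrices_def zn_op_def)

lemma zn_op_left_invertive:
  assumes "n dvd t\<^sup>2 - u"
  shows "zn_op n m k t u (zn_op n m k t u A B) C = zn_op n m k t u (zn_op n m k t u C B) A"
  using affine_mod_left_invertive[OF assms] by (simp add: zn_op_def fun_eq_iff)

lemma zn_op_commute_iff: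
  "zn_op n m k t u A B = zn_op n m k t u B A \<longleftrightarrow>
     (\<forall>i<m. \<forall>j<k. n dvd (t - u) * (A i j - B i j))"
  by (auto simp: zn_op_def fun_eq_iff affine_mod_commute_iff)

lemma zn_op_commute_trans:
  assumes "zn_op n m k t u A B = zn_op n m k t u B A"
    and "zn_op n m k t u B C = zn_op n m k t u C B"
  shows "zn_op n m k t u A C = zn_op n m k t u C A"
proof -
  have "(t - u) * (A i j - C i j) = (t - u) * (A i j - B i j) + (t - u) * (B i j - C i j)"
    for i j by (simp add: algebra_simps)
  then show ?thesis
    using assms by (simp add: zn_op_commute_iff)
qed

theorem mainTheorem6:
  fixes n t u :: int and m k :: nat
  assumes "n \<ge> 3" and "m \<ge> 1" and "k \<ge> 1"
    and "t \<in> {0..<n}" and "u \<in> {0..<n}"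
    and "t ^ 2 mod n = u mod n"
  shows "AG_groupoid (zn_matrices n m k) (zn_op n m k t u) \<and>
         transitively_commutative (zn_matrices n m k) (zn_op n m k t u)"
proof
  have "n > 0" and "n dvd t\<^sup>2 - u"
    using assms(1,6) by (simp_all add: mod_eq_dvd_iff)
  then show "AG_groupoid (zn_matrices n m k) (zn_op n m k t u)"
    unfolding AG_groupoid_def by (simp add: zn_op_closed zn_op_left_invertive)
  show "transitively_commutative (zn_matrices n m k) (zn_op n m k t u)"
    unfolding transitively_commutative_def using zn_op_commute_trans by blast
qed

end
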